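(* Assume $\Theta_0\neq\emptyset$. For a menu $\mathcal{F}\subseteq\bar{\mathcal{F}}$ (for which the standing attainment assumption holds), the equality $$\inf_{Q} U(Q,\mathcal{F}) \;=\; \sup_{\mathcal{F}'\subseteq\bar{\mathcal{F}}}\ \inf_{Q} U(Q,\mathcal{F}')$$ (maximin optimality; infima over all probability distributions $Q$ on $\Theta$, suprema over menus $\mathcal{F}'\subseteq\bar{\mathcal{F}}$ satisfying the attainment assumption) holds if and only if the menu $\mathcal{F}$ is incentive-aligned.
   Context: Let $\Theta$ be a set of types partitioned as $\Theta=\Theta_0\sqcup\Theta_1$ (null and nonnull types), and let $(P_\theta)_{\theta\in\Theta}$ be probability distributions on a measurable space $\mathcal{Z}$; $\mathbb{E}_\theta$ denotes expectation with $Z\sim P_\theta$. Fix a cost $C>0$. Fix an ambient class $\bar{\mathcal{F}}$ of measurable functions $f:\mathcal{Z}\to[0,\infty)$ ("license functions") with $\mathbb{E}_\theta[f(Z)]<\infty$ for all $\theta$. A menu is a subset $\mathcal{F}\subseteq\bar{\mathcal{F}}$; it is assumed (attainment assumption) that for every $\theta$, $\sup_{f\in\mathcal{F}}\mathbb{E}_\theta[f(Z)]$ is attained when $\mathcal{F}\ne\emptyset$. Agent behavior: an agent of type $\theta$ offered $\mathcal{F}$ opts in ($I=1$) iff $\mathcal{F}\neq\emptyset$ and $\max_{f\in\mathcal{F}}\mathbb{E}_\theta[f(Z)]>C$, in which case it selects some maximizer $f^{\mathrm{br}}(\cdot;\theta,\mathcal{F})\in\arg\max_{f\in\mathcal{F}}\mathbb{E}_\theta[f(Z)]$;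 otherwise it opts out ($I=0$). The realized license is $L=f^{\mathrm{br}}(Z;\theta,\mathcal{F})$ with $Z\sim P_\theta$. The principal's utility is a function $u:\Theta\times[0,\infty)\to\mathbb{R}$ such that: for $\theta\in\Theta_1$, $u(\theta,\cdot)$ is nondecreasing and $0\le u(\theta,L)\le a_1$ for some constant $a_1<\infty$; for $\theta\in\Theta_0$, $u(\theta,\cdot)$ is nonincreasing, $u(\theta,0)\le 0$ and $u(\theta,L)<0$ for all $L>0$. For a probability distribution $Q$ on $\Theta$, the principal's expected utility is $U(Q,\mathcal{F})=\mathbb{E}_{\theta\sim Q}\big[\mathbb{E}_{Z\sim P_\theta}[u(\theta,L)\cdot I\mid\theta]\big]$ (measurability assumed as needed). A menu $\mathcal{F}$ is incentive-aligned if $\mathbb{E}_\theta[f(Z)]\le C$ for all $\theta\in\Theta_0$ and all $f\in\mathcal{F}$. *)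

theory Defs
  imports "HOL-Probability.Probability"
begin

text \<open>Types are the elements of the type 'th; the null types are those satisfying
  the predicate null (Theta_0), the nonnull ones the rest (Theta_1).
  P th is the distribution of Z for type th. A license function is a
  function 'z => real; a menu is a set of license functions.
  br F th is the agent's selected maximizer (best response) f^br(.;th,F).\<close>

definition attains :: "('th \<Rightarrow> 'z measure) \<Rightarrow> ('z \<Rightarrow> real) set \<Rightarrow> bool" where
  "attains P F \<longleftrightarrow>
     (F \<noteq> {} \<longrightarrow> (\<forall>th. \<exists>f\<in>F. \<forall>g\<in>F. (\<integral>z. g z \<partial>P th) \<le> (\<integral>z. f z \<partial>P th)))"

definition opts_in :: "('th \<Rightarrow> 'z measure) \<Rightarrow> real
     \<Rightarrow> (('z \<Rightarrow> real) set \<Rightarrow> 'th \<Rightarrow> 'z \<Rightarrow> real) \<Rightarrow> ('z \<Rightarrow> real) set \<Rightarrow> 'th \<Rightarrow> bool" where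
  "opts_in P C br F th \<longleftrightarrow> F \<noteq> {} \<and> (\<integral>z. br F th z \<partial>P th) > C"

definition cond_util :: "('th \<Rightarrow> 'z measure) \<Rightarrow> real \<Rightarrow> ('th \<Rightarrow> real \<Rightarrow> real)
     \<Rightarrow> (('z \<Rightarrow> real) set \<Rightarrow> 'th \<Rightarrow> 'z \<Rightarrow> real) \<Rightarrow> ('z \<Rightarrow> real) set \<Rightarrow> 'th \<Rightarrow> real" where
  "cond_util P C u br F th =
     (\<integral>z. u th (br F th z) * (if opts_in P C br F th then 1 else 0) \<partial>P th)"

definition principal_U :: "('th \<Rightarrow> 'z measure) \<Rightarrow> real \<Rightarrow> ('th \<Rightarrow> real \<Rightarrow> real)
     \<Rightarrow> (('z \<Rightarrow> real) set \<Rightarrow> 'th \<Rightarrow> 'z \<Rightarrow> real) \<Rightarrow> 'th measure \<Rightarrow> ('z \<Rightarrow> real) set \<Rightarrow> real" where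
  "principal_U P C u br Q F = (\<integral>th. cond_util P C u br F th \<partial>Q)"

definition maximin_value :: "'th measure \<Rightarrow> ('th \<Rightarrow> 'z measure) \<Rightarrow> real \<Rightarrow> ('th \<Rightarrow> real \<Rightarrow> real)
     \<Rightarrow> (('z \<Rightarrow> real) set \<Rightarrow> 'th \<Rightarrow> 'z \<Rightarrow> real) \<Rightarrow> ('z \<Rightarrow> real) set \<Rightarrow> ereal" where
  "maximin_value MT P C u br F =
     (INF Q\<in>{Q. prob_space Q \<and> sets Q = sets MT}. ereal (principal_U P C u br Q F))"

definition incentive_aligned :: "('th \<Rightarrow> 'z measure) \<Rightarrow> real \<Rightarrow> ('th \<Rightarrow> bool) \<Rightarrow> ('z \<Rightarrow> real) set \<Rightarrow> bool" where
  "incentive_aligned P C null F \<longleftrightarrow> (\<forall>th. null th \<longrightarrow> (\<forall>f\<in>F. (\<integral>z. f z \<partial>P th) \<le> C))"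

end

theory Submission
  imports Defs
begin

text \<open>Offering a point mass on a type shows that the maximin value of a menu is at most the
  conditional utility of every single type. A null type never yields positive utility, so every
  menu has maximin value at most 0, while the empty menu (nobody opts in) attains 0; hence the
  supremum over menus is 0. A menu attains it iff no type yields negative utility, i.e.\ iff no null
  type opts in. A null type that opts in receives a license of expectation above \<open>C > 0\<close>, so the
  license is positive with positive probability and the strictly negative utility there makes its
  conditional utility negative; this is exactly what incentive alignment rules out.\<close>

lemma integral_neg_if_neg_on_support:
  fixes f g :: "'a \<Rightarrow> real"
  assumes g_int: "integrable M g" and f_meas: "f \<in> borel_measurable M"
    and f_nonneg: "\<And>z. z \<in> space M \<Longrightarrow> 0 \<le> f z"
    and g_nonpos: "\<And>z. z \<in> space M \<Longrightarrow> g z \<le> 0"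
    and g_neg: "\<And>z. z \<in> space M \<Longrightarrow> 0 < f z \<Longrightarrow> g z < 0"
    and f_integral: "(\<integral>z. f z \<partial>M) \<noteq> 0"
  shows "(\<integral>z. g z \<partial>M) < 0"
proof (rule ccontr)
  assume "\<not> (\<integral>z. g z \<partial>M) < 0"
  moreover have "0 \<le> (\<integral>z. - g z \<partial>M)"
    using g_nonpos by (intro Bochner_Integration.integral_nonneg) auto
  ultimately have "(\<integral>z. - g z \<partial>M) = 0" by simp
  then have "AE z in M. - g z = 0"
    using integral_nonneg_eq_0_iff_AE[of M "\<lambda>z. - g z"] g_int g_nonpos by simp
  with AE_space have "AE z in M. f z = 0"
    by eventually_elim (use f_nonneg g_neg in \<open>fastforce\<close>)
  then have "(\<integral>z. f z \<partial>M) = (\<integral>z. 0 \<partial>M)"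
    using f_meas by (intro integral_cong_AE) auto
  with f_integral show False by simp
qed

lemma maximin_value_le_cond_util:
  assumes "th \<in> space MT" and "cond_util P C u br F \<in> borel_measurable MT"
  shows "maximin_value MT P C u br F \<le> ereal (cond_util P C u br F th)"
proof -
  have "return MT th \<in> {Q. prob_space Q \<and> sets Q = sets MT}"
    using assms(1) by (simp add: prob_space_return)
  then have "maximin_value MT P C u br F \<le> ereal (principal_U P C u br (return MT th) F)"
    unfolding maximin_value_def by (rule INF_lower)
  also have "principal_U P C u br (return MT th) F = cond_util P C u br F th"
    using assms by (simp add: principal_U_def integral_return)
  finally show ?thesis .
qed

lemma maximin_value_nonneg:
  assumes "\<And>th. 0 \<le> cond_util P C u br F th"
  shows "0 \<le> maximin_value MT P C u br F"
  unfolding maximin_value_def principal_U_def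
  using assms by (auto intro!: INF_greatest Bochner_Integration.integral_nonneg)

lemma maximin_value_empty_menu:
  assumes "space MT \<noteq> {}"
  shows "maximin_value MT P C u br {} = 0"
proof -
  obtain th where "th \<in> space MT" using assms by blast
  then have "return MT th \<in> {Q. prob_space Q \<and> sets Q = sets MT}"
    by (simp add: prob_space_return)
  then have "{Q. prob_space Q \<and> sets Q = sets MT} \<noteq> {}" by blast
  then show ?thesis
    by (simp add: maximin_value_def principal_U_def cond_util_def opts_in_def)
qed

lemma cond_util_nonneg:
  assumes "\<And>z. opts_in P C br F th \<Longrightarrow> z \<in> space (P th) \<Longrightarrow> 0 \<le> u th (br F th z)"
  shows "0 \<le> cond_util P C u br F th"
  unfolding cond_util_def using assms by (intro Bochner_Integration.integral_nonneg) auto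

lemma cond_util_nonpos:
  assumes "\<And>z. opts_in P C br F th \<Longrightarrow> z \<in> space (P th) \<Longrightarrow> u th (br F th z) \<le> 0"
  shows "cond_util P C u br F th \<le> 0"
proof -
  have "0 \<le> (\<integral>z. - (u th (br F th z) * (if opts_in P C br F th then 1 else 0)) \<partial>P th)"
    using assms by (intro Bochner_Integration.integral_nonneg) auto
  then show ?thesis by (simp add: cond_util_def)
qed

locale license_screening =
  fixes MT :: "'th measure" and MZ :: "'z measure"
    and P :: "'th \<Rightarrow> 'z measure" and null :: "'th \<Rightarrow> bool"
    and C :: real and Fbar :: "('z \<Rightarrow> real) set"
    and u :: "'th \<Rightarrow> real \<Rightarrow> real"
    and br :: "('z \<Rightarrow> real) set \<Rightarrow> 'th \<Rightarrow> 'z \<Rightarrow> real"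
  assumes C_nonneg: "0 \<le> C"
    and MT_space: "space MT = UNIV"
    and P_sets: "\<And>th. sets (P th) = sets MZ"
    and Fbar_nonneg: "\<And>f z. f \<in> Fbar \<Longrightarrow> z \<in> space MZ \<Longrightarrow> 0 \<le> f z"
    and Fbar_meas: "\<And>f. f \<in> Fbar \<Longrightarrow> f \<in> borel_measurable MZ"
    and u_nonnull_nonneg: "\<And>th L. \<not> null th \<Longrightarrow> 0 \<le> L \<Longrightarrow> 0 \<le> u th L"
    and u_null_zero: "\<And>th. null th \<Longrightarrow> u th 0 \<le> 0"
    and u_null_neg: "\<And>th L. null th \<Longrightarrow> 0 < L \<Longrightarrow> u th L < 0"
    and u_int: "\<And>th f. f \<in> Fbar \<Longrightarrow> integrable (P th) (\<lambda>z. u th (f z))"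
    and br_best: "\<And>F th. F \<subseteq> Fbar \<Longrightarrow> attains P F \<Longrightarrow> F \<noteq> {} \<Longrightarrow>
        br F th \<in> F \<and> (\<forall>g\<in>F. (\<integral>z. g z \<partial>P th) \<le> (\<integral>z. br F th z \<partial>P th))"
    and cond_meas: "\<And>F. F \<subseteq> Fbar \<Longrightarrow> attains P F \<Longrightarrow>
        cond_util P C u br F \<in> borel_measurable MT"
    and null_nonempty: "\<exists>th. null th"
begin

abbreviation menus :: "('z \<Rightarrow> real) set set" where
  "menus \<equiv> {F. F \<subseteq> Fbar \<and> attains P F}"

lemma space_P: "space (P th) = space MZ"
  using P_sets by (rule sets_eq_imp_space_eq)

lemma chosen_license:
  assumes "F \<in> menus" and "opts_in P C br F th"
  shows "br F th \<in> F" and "br F th \<in> Fbar"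
    and "\<And>z. z \<in> space (P th) \<Longrightarrow> 0 \<le> br F th z"
proof -
  show "br F th \<in> F"
    using assms br_best by (auto simp: opts_in_def)
  with assms(1) show "br F th \<in> Fbar" by blast
  then show "\<And>z. z \<in> space (P th) \<Longrightarrow> 0 \<le> br F th z"
    by (simp add: Fbar_nonneg space_P)
qed

lemma u_null_nonpos:
  assumes "null th" and "0 \<le> L"
  shows "u th L \<le> 0"
proof (cases "L = 0")
  case False
  with assms show ?thesis by (simp add: u_null_neg less_imp_le)
qed (simp add: assms u_null_zero)

lemma cond_util_null_nonpos:
  assumes "F \<in> menus" and "null th"
  shows "cond_util P C u br F th \<le> 0"
proof (rule cond_util_nonpos)
  fix z assume "opts_in P C br F th" and "z \<in> space (P th)"
  then have "0 \<le> br F th z" by (rule chosen_license(3)[OF assms(1)])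
  with assms(2) show "u th (br F th z) \<le> 0" by (rule u_null_nonpos)
qed

lemma cond_util_nonnull_nonneg:
  assumes "F \<in> menus" and "\<not> null th"
  shows "0 \<le> cond_util P C u br F th"
proof (rule cond_util_nonneg)
  fix z assume "opts_in P C br F th" and "z \<in> space (P th)"
  then have "0 \<le> br F th z" by (rule chosen_license(3)[OF assms(1)])
  with assms(2) show "0 \<le> u th (br F th z)" by (rule u_nonnull_nonneg)
qed

lemma cond_util_null_opts_in_neg:
  assumes F: "F \<in> menus" and "null th" and opt: "opts_in P C br F th"
  shows "cond_util P C u br F th < 0"
proof -
  have "(\<integral>z. u th (br F th z) \<partial>P th) < 0"
  proof (rule integral_neg_if_neg_on_support)
    show "integrable (P th) (\<lambda>z. u th (br F th z))"
      using u_int chosen_license(2)[OF F opt] by blast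
    show "br F th \<in> borel_measurable (P th)"
      using Fbar_meas[OF chosen_license(2)[OF F opt]] measurable_cong_sets[OF P_sets refl] by blast
    show "(\<integral>z. br F th z \<partial>P th) \<noteq> 0"
      using opt C_nonneg by (simp add: opts_in_def)
  qed (use chosen_license(3)[OF F opt] u_null_nonpos u_null_neg \<open>null th\<close> in auto)
  with opt show ?thesis by (simp add: cond_util_def)
qed

lemma menu_maximin_value_le_cond_util:
  assumes "F \<in> menus"
  shows "maximin_value MT P C u br F \<le> ereal (cond_util P C u br F th)"
proof (rule maximin_value_le_cond_util)
  show "th \<in> space MT" by (simp add: MT_space)
  show "cond_util P C u br F \<in> borel_measurable MT"
    using assms cond_meas by blast
qed

lemma maximin_value_nonpos:
  assumes "F \<in> menus"
  shows "maximin_value MT P C u br F \<le> 0"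
proof -
  obtain th where "null th" using null_nonempty by blast
  have "maximin_value MT P C u br F \<le> ereal (cond_util P C u br F th)"
    using assms by (rule menu_maximin_value_le_cond_util)
  also have "\<dots> \<le> 0"
    using cond_util_null_nonpos[OF assms \<open>null th\<close>] by simp
  finally show ?thesis .
qed

lemma SUP_maximin_value_eq_0: "(SUP F\<in>menus. maximin_value MT P C u br F) = 0"
proof (rule antisym)
  show "(SUP F\<in>menus. maximin_value MT P C u br F) \<le> 0"
    using maximin_value_nonpos by (rule SUP_least)
  have "{} \<in> menus" by (simp add: attains_def)
  then have "maximin_value MT P C u br {} \<le> (SUP F\<in>menus. maximin_value MT P C u br F)"
    by (rule SUP_upper)
  moreover have "maximin_value MT P C u br {} = 0"
    using MT_space by (intro maximin_value_empty_menu) simp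
  ultimately show "0 \<le> (SUP F\<in>menus. maximin_value MT P C u br F)" by simp
qed

lemma maximin_value_nonneg_iff_incentive_aligned:
  assumes F: "F \<in> menus"
  shows "0 \<le> maximin_value MT P C u br F \<longleftrightarrow> incentive_aligned P C null F"
proof
  assume nonneg: "0 \<le> maximin_value MT P C u br F"
  show "incentive_aligned P C null F"
    unfolding incentive_aligned_def
  proof (intro allI impI ballI, rule ccontr)
    fix th f
    assume "null th" and "f \<in> F" and "\<not> (\<integral>z. f z \<partial>P th) \<le> C"
    moreover from \<open>f \<in> F\<close> have "F \<noteq> {}" by blast
    moreover from calculation have "(\<integral>z. f z \<partial>P th) \<le> (\<integral>z. br F th z \<partial>P th)"
      using br_best F by blast
    ultimately have "opts_in P C br F th" by (simp add: opts_in_def)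
    with F \<open>null th\<close> have "ereal (cond_util P C u br F th) < 0"
      by (simp add: cond_util_null_opts_in_neg)
    moreover have "maximin_value MT P C u br F \<le> ereal (cond_util P C u br F th)"
      using F by (rule menu_maximin_value_le_cond_util)
    ultimately show False using nonneg by (meson order_trans not_le)
  qed
next
  assume aligned: "incentive_aligned P C null F"
  have "0 \<le> cond_util P C u br F th" for th
  proof (cases "null th")
    case True
    have "\<not> opts_in P C br F th"
    proof
      assume opt: "opts_in P C br F th"
      then have "br F th \<in> F" by (rule chosen_license(1)[OF F])
      with aligned True have "(\<integral>z. br F th z \<partial>P th) \<le> C"
        by (simp add: incentive_aligned_def)
      with opt show False by (simp add: opts_in_def)
    qed
    then show ?thesis by (simp add: cond_util_def)
  qed (rule cond_util_nonnull_nonneg[OF F])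
  then show "0 \<le> maximin_value MT P C u br F"
    by (rule maximin_value_nonneg)
qed

end

theorem theorem2p2:
  fixes MT :: "'th measure" and MZ :: "'z measure"
    and P :: "'th \<Rightarrow> 'z measure" and null :: "'th \<Rightarrow> bool"
    and C a1 :: real and Fbar F :: "('z \<Rightarrow> real) set"
    and u :: "'th \<Rightarrow> real \<Rightarrow> real"
    and br :: "('z \<Rightarrow> real) set \<Rightarrow> 'th \<Rightarrow> 'z \<Rightarrow> real"
  assumes C_pos: "C > 0"
    and MT_space: "space MT = UNIV"
    and P_prob: "\<And>th. prob_space (P th)"
    and P_sets: "\<And>th. sets (P th) = sets MZ"
    and Fbar_nonneg: "\<And>f z. f \<in> Fbar \<Longrightarrow> z \<in> space MZ \<Longrightarrow> f z \<ge> 0"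
    and Fbar_meas: "\<And>f. f \<in> Fbar \<Longrightarrow> f \<in> borel_measurable MZ"
    and Fbar_int: "\<And>f th. f \<in> Fbar \<Longrightarrow> integrable (P th) f"
    and u_nonnull_mono: "\<And>th. \<not> null th \<Longrightarrow> mono_on {0..} (u th)"
    and u_nonnull_bdd: "\<And>th L. \<not> null th \<Longrightarrow> L \<ge> 0 \<Longrightarrow> 0 \<le> u th L \<and> u th L \<le> a1"
    and u_null_anti: "\<And>th. null th \<Longrightarrow> antimono_on {0..} (u th)"
    and u_null_zero: "\<And>th. null th \<Longrightarrow> u th 0 \<le> 0"
    and u_null_neg: "\<And>th L. null th \<Longrightarrow> L > 0 \<Longrightarrow> u th L < 0"
    and u_int: "\<And>th f. f \<in> Fbar \<Longrightarrow> integrable (P th) (\<lambda>z. u th (f z))"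
    and br_best: "\<And>F' th. F' \<subseteq> Fbar \<Longrightarrow> attains P F' \<Longrightarrow> F' \<noteq> {} \<Longrightarrow>
        br F' th \<in> F' \<and> (\<forall>g\<in>F'. (\<integral>z. g z \<partial>P th) \<le> (\<integral>z. br F' th z \<partial>P th))"
    and cond_meas: "\<And>F'. F' \<subseteq> Fbar \<Longrightarrow> attains P F' \<Longrightarrow>
        cond_util P C u br F' \<in> borel_measurable MT"
    and null_nonempty: "\<exists>th. null th"
    and F_sub: "F \<subseteq> Fbar"
    and F_att: "attains P F"
  shows "maximin_value MT P C u br F
           = (SUP F'\<in>{F'. F' \<subseteq> Fbar \<and> attains P F'}. maximin_value MT P C u br F')
         \<longleftrightarrow> incentive_aligned P C null F"
proof -
  interpret license_screening MT MZ P null C Fbar u br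
    using assms by unfold_locales (auto simp: less_imp_le)
  have F: "F \<in> menus" using F_sub F_att by simp
  show ?thesis
    using SUP_maximin_value_eq_0 maximin_value_nonpos[OF F]
      maximin_value_nonneg_iff_incentive_aligned[OF F]
    by (metis order_antisym)
qed

end
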